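(* If $f$ satisfies the rate conditions of order $0$ and $z_1,z_2\in D$ satisfy $z_1\in J_s(z_2,1/L)$ and $f(z_1)\in J_s(f(z_2),1/L)$, then $\|\pi_y(f(z_1)-f(z_2))\|\le\mu_{s,1}\|\pi_y(z_1-z_2)\|$.
   Context: $c,u,s$ positive integers, $\Lambda=(\mathbb{R}/\mathbb{Z})^c$, $R_\Lambda=\tfrac12$; points are "in the same chart" if their $\lambda$-components have lifts to $\mathbb{R}^c$ at distance $\le R_\Lambda$; differences, norms, cones and derivatives are computed in such lifts. $\overline B_n(R)$ closed ball at $0$; Euclidean norms. $0<R<R_\Lambda/2$, $D=\Lambda\times\overline B_u(R)\times\overline B_s(R)$, $z=(\lambda,x,y)$, projections $\pi_\lambda,\pi_x,\pi_y,\pi_{(\lambda,x)}$; $f:D\to\Lambda\times\mathbb{R}^u\times\mathbb{R}^s$ is $C^1$, $f=(f_\lambda,f_x,f_y)$. $m(A)=\max\{c:\|Av\|\ge c\|v\|\}$, $m(\mathbf A)=\inf_{A\in\mathbf A}m(A)$; $[\partial g/\partial w(U)]$ = set of matrices with $(i,j)$ entry in $[\inf_U\partial g_i/\partial w_j,\sup_U\partial g_i/\partial w_j]$; $P(z)=\{w\in D:\|\pi_\lambda w-\pi_\lambda z\|\le R_\Lambda/2\}$. Fix $L\in(2R/R_\Lambda,1)$. $\mu_{s,1}=\sup_D\{\|\partial_yf_y\|+\frac1L\|\partial_{(\lambda,x)}f_y\|\}$, $\xi_{u,1,P}=\inf_{z\in D}m[\partial_xf_x(P(z))]-\frac1L\sup_D\|\partial_{(\lambda,y)}f_x\|$,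 $\mu_{cs,1}=\sup_D\{\|\partial_{(\lambda,y)}f_{(\lambda,y)}\|+L\|\partial_xf_{(\lambda,y)}\|\}$, $\xi_{cu,1,P}=\inf_{z\in D}m[\partial_{(\lambda,x)}f_{(\lambda,x)}(P(z))]-L\sup_D\|\partial_yf_{(\lambda,x)}\|$. Rate conditions of order $0$: $\mu_{s,1}<1<\xi_{u,1,P}$, $\mu_{cs,1}<\xi_{u,1,P}$, $\mu_{s,1}<\xi_{cu,1,P}$. $J_s(z,M)=\{(\lambda,x,y):\|(\lambda,x)-\pi_{(\lambda,x)}z\|\le M\|y-\pi_yz\|\}$. *)

theory Defs
  imports "HOL-Analysis.Analysis"
begin

text \<open>Points of D are represented by lifts (lambda, x, y) with lambda in R^c
  (the universal cover of the torus Lambda = (R/Z)^c).\<close>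

type_synonym ('c, 'u, 's) pt = "(real^'c) \<times> (real^'u) \<times> (real^'s)"

definition RL :: real where "RL = 1/2"

definition int_vec :: "real^'n \<Rightarrow> bool" where
  "int_vec k \<longleftrightarrow> (\<forall>i. k $ i \<in> \<int>)"

definition Dlift :: "real \<Rightarrow> ('c::finite, 'u::finite, 's::finite) pt set" where
  "Dlift R = {z. norm (fst (snd z)) \<le> R \<and> norm (snd (snd z)) \<le> R}"

text \<open>F is the lift of a map f : D -> Lambda x R^u x R^s: shifting the lambda-lift
  by an integer vector changes F only by an integer vector in the lambda-component.\<close>
definition torus_lift :: "real \<Rightarrow> (('c::finite, 'u::finite, 's::finite) pt \<Rightarrow> ('c, 'u, 's) pt) \<Rightarrow> bool" where
  "torus_lift R F \<longleftrightarrow> (\<forall>z \<in> Dlift R. \<forall>k. int_vec k \<longrightarrow>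
      (\<exists>n. int_vec n \<and> F (fst z + k, snd z) = (fst (F z) + n, snd (F z))))"

definition Pset :: "real \<Rightarrow> ('c::finite, 'u::finite, 's::finite) pt \<Rightarrow> ('c, 'u, 's) pt set" where
  "Pset R z = {w \<in> Dlift R. \<exists>k. int_vec k \<and> norm (fst w + k - fst z) \<le> RL / 2}"

text \<open>Cone J_s(z0, M); z and z0 must lie in the same chart, differences computed in lifts.\<close>
definition in_Js :: "('c::finite, 'u::finite, 's::finite) pt \<Rightarrow> ('c, 'u, 's) pt \<Rightarrow> real \<Rightarrow> bool" where
  "in_Js z z0 M \<longleftrightarrow> (\<exists>k. int_vec k \<and> norm (fst z + k - fst z0) \<le> RL \<and>
      norm (fst z + k - fst z0, fst (snd z) - fst (snd z0)) \<le> M * norm (snd (snd z) - snd (snd z0)))"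

definition min_norm :: "('a::real_normed_vector \<Rightarrow> 'b::real_normed_vector) \<Rightarrow> real" where
  "min_norm A = Sup {c. \<forall>v. c * norm v \<le> norm (A v)}"

definition interval_matrices ::
  "('p \<Rightarrow> 'a::euclidean_space \<Rightarrow> 'b::euclidean_space) \<Rightarrow> 'p set \<Rightarrow> ('a \<Rightarrow> 'b) set" where
  "interval_matrices T U = {A. linear A \<and> (\<forall>i\<in>Basis. \<forall>j\<in>Basis.
      (INF w\<in>U. T w j \<bullet> i) \<le> A j \<bullet> i \<and> A j \<bullet> i \<le> (SUP w\<in>U. T w j \<bullet> i))}"

definition min_norm_set :: "('a::real_normed_vector \<Rightarrow> 'b::real_normed_vector) set \<Rightarrow> real" where
  "min_norm_set S = (INF A\<in>S. min_norm A)"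

definition d_y_fy :: "(('c::finite, 'u::finite, 's::finite) pt \<Rightarrow> ('c, 'u, 's) pt) \<Rightarrow> real^'s \<Rightarrow> real^'s" where
  "d_y_fy A v = snd (snd (A (0, 0, v)))"
definition d_lx_fy :: "(('c::finite, 'u::finite, 's::finite) pt \<Rightarrow> ('c, 'u, 's) pt) \<Rightarrow> ((real^'c) \<times> (real^'u)) \<Rightarrow> real^'s" where
  "d_lx_fy A v = snd (snd (A (fst v, snd v, 0)))"
definition d_x_fx :: "(('c::finite, 'u::finite, 's::finite) pt \<Rightarrow> ('c, 'u, 's) pt) \<Rightarrow> real^'u \<Rightarrow> real^'u" where
  "d_x_fx A v = fst (snd (A (0, v, 0)))"
definition d_ly_fx :: "(('c::finite, 'u::finite, 's::finite) pt \<Rightarrow> ('c, 'u, 's) pt) \<Rightarrow> ((real^'c) \<times> (real^'s)) \<Rightarrow> real^'u" where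
  "d_ly_fx A v = fst (snd (A (fst v, 0, snd v)))"
definition d_ly_fly :: "(('c::finite, 'u::finite, 's::finite) pt \<Rightarrow> ('c, 'u, 's) pt) \<Rightarrow> ((real^'c) \<times> (real^'s)) \<Rightarrow> ((real^'c) \<times> (real^'s))" where
  "d_ly_fly A v = (fst (A (fst v, 0, snd v)), snd (snd (A (fst v, 0, snd v))))"
definition d_x_fly :: "(('c::finite, 'u::finite, 's::finite) pt \<Rightarrow> ('c, 'u, 's) pt) \<Rightarrow> real^'u \<Rightarrow> ((real^'c) \<times> (real^'s))" where
  "d_x_fly A v = (fst (A (0, v, 0)), snd (snd (A (0, v, 0))))"
definition d_lx_flx :: "(('c::finite, 'u::finite, 's::finite) pt \<Rightarrow> ('c, 'u, 's) pt) \<Rightarrow> ((real^'c) \<times> (real^'u)) \<Rightarrow> ((real^'c) \<times> (real^'u))" where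
  "d_lx_flx A v = (fst (A (fst v, snd v, 0)), fst (snd (A (fst v, snd v, 0))))"
definition d_y_flx :: "(('c::finite, 'u::finite, 's::finite) pt \<Rightarrow> ('c, 'u, 's) pt) \<Rightarrow> real^'s \<Rightarrow> ((real^'c) \<times> (real^'u))" where
  "d_y_flx A v = (fst (A (0, 0, v)), fst (snd (A (0, 0, v))))"

definition mu_s1 :: "(('c::finite, 'u::finite, 's::finite) pt \<Rightarrow> ('c, 'u, 's) pt \<Rightarrow> ('c, 'u, 's) pt) \<Rightarrow> real \<Rightarrow> real \<Rightarrow> real" where
  "mu_s1 DF L R = (SUP z\<in>Dlift R. onorm (d_y_fy (DF z)) + 1 / L * onorm (d_lx_fy (DF z)))"

definition xi_u1P :: "(('c::finite, 'u::finite, 's::finite) pt \<Rightarrow> ('c, 'u, 's) pt \<Rightarrow> ('c, 'u, 's) pt) \<Rightarrow> real \<Rightarrow> real \<Rightarrow> real" where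
  "xi_u1P DF L R = (INF z\<in>Dlift R. min_norm_set (interval_matrices (\<lambda>w. d_x_fx (DF w)) (Pset R z)))
      - 1 / L * (SUP z\<in>Dlift R. onorm (d_ly_fx (DF z)))"

definition mu_cs1 :: "(('c::finite, 'u::finite, 's::finite) pt \<Rightarrow> ('c, 'u, 's) pt \<Rightarrow> ('c, 'u, 's) pt) \<Rightarrow> real \<Rightarrow> real \<Rightarrow> real" where
  "mu_cs1 DF L R = (SUP z\<in>Dlift R. onorm (d_ly_fly (DF z)) + L * onorm (d_x_fly (DF z)))"

definition xi_cu1P :: "(('c::finite, 'u::finite, 's::finite) pt \<Rightarrow> ('c, 'u, 's) pt \<Rightarrow> ('c, 'u, 's) pt) \<Rightarrow> real \<Rightarrow> real \<Rightarrow> real" where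
  "xi_cu1P DF L R = (INF z\<in>Dlift R. min_norm_set (interval_matrices (\<lambda>w. d_lx_flx (DF w)) (Pset R z)))
      - L * (SUP z\<in>Dlift R. onorm (d_y_flx (DF z)))"

end

theory Submission
  imports Defs
begin

text \<open>Translate the lift of \<open>z1\<close> by the integer vector given by the cone condition, so that
  \<open>z1\<close> and \<open>z2\<close> lie in one chart and \<open>h = z1 - z2\<close> satisfies \<open>|(h_\<lambda>, h_x)| \<le> |h_y| / L\<close>;
  this does not change the \<open>y\<close>-component of \<open>f(z1)\<close>. At every point of \<open>D\<close> the
  \<open>y\<close>-component of \<open>Df h\<close> is \<open>\<partial>_y f_y h_y + \<partial>_(\<lambda>,x) f_y (h_\<lambda>, h_x)\<close>, of norm at most
  \<open>\<mu>_s,1 |h_y|\<close>, and the mean value inequality along the segment from \<open>z2\<close> to \<open>z1\<close> gives the claim.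

  The one delicate point is that \<open>\<mu>_s,1\<close>, a supremum over the non-compact lift of \<open>D\<close>, really
  bounds each term (the supremum of an unbounded set of reals is a junk value). By connectedness
  the integer shift in the torus-lift property does not depend on the point, so \<open>Df\<close> is
  periodic in \<open>\<lambda>\<close> and hence bounded by its maximum over a compact fundamental domain.\<close>

lemma Dlift_shift_lambda:
  fixes k :: "real^'c::finite"
  shows "((+) (k, 0, 0)) ` Dlift R = (Dlift R :: ('c, 'u::finite, 's::finite) pt set)"
proof (intro equalityI subsetI)
  fix z :: "('c, 'u, 's) pt" assume "z \<in> (+) (k, 0, 0) ` Dlift R"
  then show "z \<in> Dlift R" by (auto simp: Dlift_def)
next
  fix z :: "('c, 'u, 's) pt" assume "z \<in> Dlift R"
  then have "z - (k, 0, 0) \<in> Dlift R" by (simp add: Dlift_def)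
  then show "z \<in> (+) (k, 0, 0) ` Dlift R"
    by (rule rev_image_eqI) simp
qed

lemma interior_Dlift_shift_lambda:
  fixes k :: "real^'c::finite"
  assumes "w \<in> interior (Dlift R :: ('c, 'u::finite, 's::finite) pt set)"
  shows "w + (k, 0, 0) \<in> interior (Dlift R)"
proof -
  have "(k, 0, 0) + w \<in> (+) (k, 0, 0) ` interior (Dlift R)"
    using assms by blast
  then have "(k, 0, 0) + w \<in> interior (Dlift R)"
    by (simp only: interior_translation[symmetric] Dlift_shift_lambda)
  then show ?thesis
    by (simp add: add.commute)
qed

lemma norm_snd_snd_le: "norm (snd (snd p)) \<le> norm p"
  using norm_snd_le[of "snd (snd p)" "fst (snd p)"] norm_snd_le[of "snd p" "fst p"] by simp

lemma norm_fst_snd_le: "norm (fst (snd p)) \<le> norm p"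
  using norm_fst_le[of "fst (snd p)" "snd (snd p)"] norm_snd_le[of "snd p" "fst p"] by simp

lemma ball_subset_Dlift: "ball 0 R \<subseteq> (Dlift R :: ('c::finite, 'u::finite, 's::finite) pt set)"
proof
  fix z :: "('c, 'u, 's) pt"
  assume "z \<in> ball 0 R"
  then show "z \<in> Dlift R"
    using norm_fst_snd_le[of z] norm_snd_snd_le[of z] by (simp add: Dlift_def)
qed

lemma Dlift_convex: "convex (Dlift R :: ('c::finite, 'u::finite, 's::finite) pt set)"
proof -
  have eq: "Dlift R = (\<lambda>z. fst (snd z)) -` cball 0 R \<inter> (\<lambda>z. snd (snd z)) -` cball 0 R"
    by (auto simp: Dlift_def)
  have "linear (\<lambda>z::('c, 'u, 's) pt. fst (snd z))"
    and "linear (\<lambda>z::('c, 'u, 's) pt. snd (snd z))"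
    by (auto intro: linear_compose[unfolded o_def] linear_fst linear_snd)
  then show ?thesis
    unfolding eq by (intro convex_Int convex_linear_vimage convex_cball)
qed

lemma closure_interior_Dlift:
  assumes "0 < R"
  shows "closure (interior (Dlift R)) = (Dlift R :: ('c::finite, 'u::finite, 's::finite) pt set)"
proof -
  have "0 \<in> interior (Dlift R :: ('c, 'u, 's) pt set)"
    using assms interior_maximal[OF ball_subset_Dlift[of R] open_ball] by auto
  then have "closure (interior (Dlift R)) = closure (Dlift R :: ('c, 'u, 's) pt set)"
    by (intro convex_closure_interior Dlift_convex) auto
  moreover have "closed (Dlift R :: ('c, 'u, 's) pt set)"
    unfolding Dlift_def by (intro closed_Collect_conj closed_Collect_le continuous_intros)
  ultimately show ?thesis
    by simp
qed

lemma bounded_linear_d_y_fy: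
  assumes "bounded_linear A"
  shows "bounded_linear (d_y_fy A)"
  unfolding d_y_fy_def
  by (intro bounded_linear_compose[OF bounded_linear_snd] bounded_linear_compose[OF assms]
      bounded_linear_Pair bounded_linear_zero bounded_linear_ident)

lemma bounded_linear_d_lx_fy:
  assumes "bounded_linear A"
  shows "bounded_linear (d_lx_fy A)"
  unfolding d_lx_fy_def
  by (intro bounded_linear_compose[OF bounded_linear_snd] bounded_linear_compose[OF assms]
      bounded_linear_Pair bounded_linear_zero bounded_linear_fst bounded_linear_snd)

lemma onorm_d_y_fy_le:
  assumes "bounded_linear A"
  shows "onorm (d_y_fy A) \<le> onorm A"
proof (rule onorm_bound)
  show "0 \<le> onorm A" using assms by (rule onorm_pos_le)
  fix v
  have "norm (d_y_fy A v) \<le> norm (A (0, 0, v))"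
    unfolding d_y_fy_def by (rule norm_snd_snd_le)
  also have "\<dots> \<le> onorm A * norm v"
    using onorm[OF assms, of "(0, 0, v)"] by (simp add: norm_Pair)
  finally show "norm (d_y_fy A v) \<le> onorm A * norm v" .
qed

lemma onorm_d_lx_fy_le:
  assumes "bounded_linear A"
  shows "onorm (d_lx_fy A) \<le> onorm A"
proof (rule onorm_bound)
  show "0 \<le> onorm A" using assms by (rule onorm_pos_le)
  fix v
  have "norm (d_lx_fy A v) \<le> norm (A (fst v, snd v, 0))"
    unfolding d_lx_fy_def by (rule norm_snd_snd_le)
  also have "\<dots> \<le> onorm A * norm v"
    using onorm[OF assms, of "(fst v, snd v, 0)"] by (cases v) (simp add: norm_Pair)
  finally show "norm (d_lx_fy A v) \<le> onorm A * norm v" .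
qed

lemma norm_snd_snd_le_in_cone:
  assumes A: "bounded_linear A"
    and cone: "norm (fst h, fst (snd h)) \<le> M * norm (snd (snd h))"
  shows "norm (snd (snd (A h))) \<le> (onorm (d_y_fy A) + M * onorm (d_lx_fy A)) * norm (snd (snd h))"
proof -
  have "A h = A (fst h, fst (snd h), 0) + A (0, 0, snd (snd h))"
    using linear_add[OF bounded_linear.linear[OF A], of "(fst h, fst (snd h), 0)" "(0, 0, snd (snd h))"] by simp
  then have "snd (snd (A h)) = d_lx_fy A (fst h, fst (snd h)) + d_y_fy A (snd (snd h))"
    by (simp add: d_lx_fy_def d_y_fy_def)
  then have "norm (snd (snd (A h)))
      \<le> norm (d_lx_fy A (fst h, fst (snd h))) + norm (d_y_fy A (snd (snd h)))"
    by (simp add: norm_triangle_ineq)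
  also have "\<dots> \<le> onorm (d_lx_fy A) * norm (fst h, fst (snd h)) + onorm (d_y_fy A) * norm (snd (snd h))"
    by (intro add_mono onorm bounded_linear_d_lx_fy bounded_linear_d_y_fy A)
  also have "\<dots> \<le> onorm (d_lx_fy A) * (M * norm (snd (snd h))) + onorm (d_y_fy A) * norm (snd (snd h))"
    by (intro add_mono mult_left_mono cone onorm_pos_le bounded_linear_d_lx_fy A order_refl)
  also have "\<dots> = (onorm (d_y_fy A) + M * onorm (d_lx_fy A)) * norm (snd (snd h))"
    by (simp only: distrib_right mult.assoc mult.commute[of M])
  finally show ?thesis .
qed

lemma continuous_Ints_valued_constant_on:
  fixes g :: "'a::topological_space \<Rightarrow> real"
  assumes "connected S" "continuous_on S g" "\<And>x. x \<in> S \<Longrightarrow> g x \<in> \<int>"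
  shows "g constant_on S"
proof (rule continuous_discrete_range_constant[OF assms(1,2)])
  fix x assume "x \<in> S"
  then show "\<exists>e>0. \<forall>y. y \<in> S \<and> g y \<noteq> g x \<longrightarrow> e \<le> norm (g y - g x)"
    using assms(3) by (intro exI[of _ 1]) (auto intro!: Ints_nonzero_abs_ge1 Ints_diff)
qed

lemma has_derivative_shift_periodic:
  fixes f :: "'a::real_normed_vector \<Rightarrow> 'b::real_normed_vector"
  assumes deriv: "\<And>z. z \<in> S \<Longrightarrow> (f has_derivative f' z) (at z within S)"
    and periodic: "\<And>z. z \<in> S \<Longrightarrow> f (z + c) = f z + d"
    and w: "w \<in> interior S" "w + c \<in> interior S"
  shows "f' (w + c) = f' w"
proof (rule has_derivative_unique)
  have "(f has_derivative f' (w + c)) (at (w + c))"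
    using deriv[of "w + c"] interior_subset[of S] w(2) by (auto simp: at_within_interior[OF w(2)])
  then show "((\<lambda>z. f (z + c)) has_derivative f' (w + c)) (at w)"
    by (rule has_derivative_compose[OF has_derivative_add_const[OF has_derivative_ident, where c=c]])
  have "(f has_derivative f' w) (at w)"
    using deriv[of w] interior_subset[of S] w(1) by (auto simp: at_within_interior[OF w(1)])
  then have "((\<lambda>z. f z + d) has_derivative f' w) (at w)"
    by (rule has_derivative_add_const)
  then show "((\<lambda>z. f (z + c)) has_derivative f' w) (at w)"
    by (rule has_derivative_transform_within_open[OF _ open_interior w(1)])
      (metis periodic interior_subset subsetD)
qed

lemma torus_lift_uniform_shift:
  fixes F :: "('c::finite, 'u::finite, 's::finite) pt \<Rightarrow> ('c, 'u, 's) pt" and k :: "real^'c"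
  assumes R: "0 < R" and cont: "continuous_on (Dlift R) F" and lift: "torus_lift R F"
    and k: "int_vec k"
  obtains n where "int_vec n" "\<And>z. z \<in> Dlift R \<Longrightarrow> F (z + (k, 0, 0)) = F z + (n, 0, 0)"
proof -
  define G where "G z = fst (F (z + (k, 0, 0))) - fst (F z)" for z
  have G: "int_vec (G z) \<and> F (z + (k, 0, 0)) = F z + (G z, 0, 0)" if z: "z \<in> Dlift R" for z
  proof -
    obtain n where n: "int_vec n" "F (fst z + k, snd z) = (fst (F z) + n, snd (F z))"
      using lift[unfolded torus_lift_def, rule_format, OF z k] by blast
    have "z + (k, 0, 0) = (fst z + k, snd z)"
      by (simp add: prod_eq_iff)
    with n(2) have "F (z + (k, 0, 0)) = (fst (F z) + n, snd (F z))"
      by (simp only:)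
    with n(1) show ?thesis
      by (simp add: G_def prod_eq_iff)
  qed
  have "continuous_on (Dlift R) (\<lambda>z. F (z + (k, 0, 0)))"
    by (rule continuous_on_compose2[OF cont]) (auto simp: Dlift_def intro!: continuous_intros)
  then have "continuous_on (Dlift R) G"
    unfolding G_def by (intro continuous_on_diff continuous_on_fst cont)
  then have const: "(\<lambda>z. G z $ i) constant_on Dlift R" for i
    using G by (intro continuous_Ints_valued_constant_on convex_connected Dlift_convex
        continuous_on_component) (auto simp: int_vec_def)
  have "0 \<in> Dlift R"
    using R by (simp add: Dlift_def)
  have G_const: "G z = G 0" if "z \<in> Dlift R" for z
  proof -
    have "G z $ i = G 0 $ i" for i
      using const[of i] that \<open>0 \<in> Dlift R\<close> unfolding constant_on_def by metis
    then show ?thesis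
      by (simp add: vec_eq_iff)
  qed
  show thesis
  proof (rule that)
    show "int_vec (G 0)"
      using G \<open>0 \<in> Dlift R\<close> by blast
    fix z :: "('c, 'u, 's) pt"
    assume "z \<in> Dlift R"
    then show "F (z + (k, 0, 0)) = F z + (G 0, 0, 0)"
      using G[of z] G_const[of z] by argo
  qed
qed

text \<open>Periodicity is only assumed at interior points, where derivatives within \<^const>\<open>Dlift\<close> are
  unique; the bound reaches the boundary by continuity.\<close>

lemma periodic_continuous_bounded_on_Dlift:
  fixes G :: "('c::finite, 'u::finite, 's::finite) pt \<Rightarrow> 'b::real_normed_vector"
  assumes R: "0 < R" and cont: "continuous_on (Dlift R) G"
    and periodic: "\<And>w k. w \<in> interior (Dlift R) \<Longrightarrow> int_vec k \<Longrightarrow> G (w + (k, 0, 0)) = G w"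
  obtains M where "\<And>z. z \<in> Dlift R \<Longrightarrow> norm (G z) \<le> M"
proof -
  define K :: "('c, 'u, 's) pt set" where "K = cbox 0 1 \<times> cball 0 R \<times> cball 0 R"
  have "K \<subseteq> Dlift R"
    unfolding K_def Dlift_def by auto
  moreover have "compact K"
    unfolding K_def by (intro compact_Times compact_cbox compact_cball)
  ultimately have "bounded (G ` K)"
    by (intro compact_imp_bounded compact_continuous_image continuous_on_subset[OF cont])
  then obtain M where M: "\<And>z. z \<in> K \<Longrightarrow> norm (G z) \<le> M"
    unfolding bounded_iff by blast
  have "norm (G w) \<le> M" if w: "w \<in> interior (Dlift R)" for w
  proof -
    define k :: "real^'c" where "k = (\<chi> i. of_int \<lfloor>fst w $ i\<rfloor>)"
    define z where "z = w + (- k, 0, 0)"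
    have "z \<in> interior (Dlift R)"
      using interior_Dlift_shift_lambda[OF w, of "- k"] by (simp add: z_def)
    moreover have "int_vec k"
      by (simp add: int_vec_def k_def)
    moreover have "z + (k, 0, 0) = w"
      by (simp add: z_def prod_eq_iff)
    ultimately have "G w = G z"
      using periodic[of z k] by simp
    moreover have "fst z \<in> cbox 0 1"
    proof -
      have "0 \<le> fst w $ i - of_int \<lfloor>fst w $ i\<rfloor> \<and> fst w $ i - of_int \<lfloor>fst w $ i\<rfloor> \<le> 1" for i
        using of_int_floor_le[of "fst w $ i"] real_of_int_floor_add_one_gt[of "fst w $ i"] by linarith
      then show ?thesis
        by (simp add: z_def k_def mem_box_cart)
    qed
    moreover have "snd z \<in> cball 0 R \<times> cball 0 R"
      using w interior_subset[of "Dlift R"] by (auto simp: z_def Dlift_def mem_Times_iff)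
    ultimately show ?thesis
      using M[of z] by (simp add: K_def mem_Times_iff)
  qed
  then have "norm (G z) \<le> M" if "z \<in> Dlift R" for z
    using continuous_on_closure_norm_le[of "interior (Dlift R)" G M z] cont that
    by (simp add: closure_interior_Dlift[OF R])
  then show thesis
    by (rule that)
qed

lemma torus_lift_derivative_bounded:
  fixes F :: "('c::finite, 'u::finite, 's::finite) pt \<Rightarrow> ('c, 'u, 's) pt"
  assumes R: "0 < R"
    and deriv: "\<forall>z\<in>Dlift R. (F has_derivative blinfun_apply (F' z)) (at z within Dlift R)"
    and C1: "continuous_on (Dlift R) F'"
    and lift: "torus_lift R F"
  obtains M where "\<And>z. z \<in> Dlift R \<Longrightarrow> norm (F' z) \<le> M"
proof (rule periodic_continuous_bounded_on_Dlift[OF R C1])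
  fix w :: "('c, 'u, 's) pt" and k :: "real^'c"
  assume w: "w \<in> interior (Dlift R)" and k: "int_vec k"
  have "continuous_on (Dlift R) F"
    using deriv by (intro has_derivative_continuous_on) blast
  then obtain n where n: "\<And>z. z \<in> Dlift R \<Longrightarrow> F (z + (k, 0, 0)) = F z + (n, 0, 0)"
    using torus_lift_uniform_shift[OF R _ lift k] by blast
  have "w + (k, 0, 0) \<in> interior (Dlift R)"
    using w by (rule interior_Dlift_shift_lambda)
  then have "blinfun_apply (F' (w + (k, 0, 0))) = blinfun_apply (F' w)"
    using has_derivative_shift_periodic[of "Dlift R" F "\<lambda>z. blinfun_apply (F' z)", OF _ n w]
      deriv by blast
  then show "F' (w + (k, 0, 0)) = F' w"
    by (simp add: blinfun_apply_inject)
qed (rule that)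

lemma le_mu_s1:
  fixes DF :: "('c::finite, 'u::finite, 's::finite) pt \<Rightarrow> ('c, 'u, 's) pt \<Rightarrow> ('c, 'u, 's) pt"
  assumes lin: "\<And>z. z \<in> Dlift R \<Longrightarrow> bounded_linear (DF z)"
    and bounded: "\<And>z. z \<in> Dlift R \<Longrightarrow> onorm (DF z) \<le> M"
    and L: "0 \<le> L" and z: "z \<in> Dlift R"
  shows "onorm (d_y_fy (DF z)) + 1 / L * onorm (d_lx_fy (DF z)) \<le> mu_s1 DF L R"
  unfolding mu_s1_def
proof (rule cSUP_upper[OF z bdd_aboveI2])
  fix w :: "('c, 'u, 's) pt"
  assume w: "w \<in> Dlift R"
  have "onorm (d_y_fy (DF w)) \<le> M" "onorm (d_lx_fy (DF w)) \<le> M"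
    using onorm_d_y_fy_le[OF lin[OF w]] onorm_d_lx_fy_le[OF lin[OF w]] bounded[OF w] by linarith+
  then show "onorm (d_y_fy (DF w)) + 1 / L * onorm (d_lx_fy (DF w)) \<le> M + 1 / L * M"
    using L by (intro add_mono mult_left_mono) auto
qed

lemma differentiable_bound_along_segment:
  fixes f :: "'a::real_normed_vector \<Rightarrow> 'b::real_normed_vector"
  assumes "convex S" "a \<in> S" "b \<in> S"
    and deriv: "\<And>z. z \<in> S \<Longrightarrow> (f has_derivative f' z) (at z within S)"
    and P: "bounded_linear P"
    and bound: "\<And>z. z \<in> S \<Longrightarrow> norm (P (f' z (b - a))) \<le> B"
  shows "norm (P (f b) - P (f a)) \<le> B"
proof -
  let ?p = "\<lambda>t. a + t *\<^sub>R (b - a)"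
  have seg: "?p t \<in> S" if "t \<in> {0..1}" for t
    using \<open>convex S\<close> \<open>a \<in> S\<close> \<open>b \<in> S\<close> that convexD_alt[of S a b t]
    by (simp add: algebra_simps)
  have "((\<lambda>t. P (f (?p t))) has_derivative (\<lambda>s. P (f' (?p t) (s *\<^sub>R (b - a))))) (at t within {0..1})"
    if "t \<in> {0..1}" for t
  proof -
    have "(?p has_derivative (\<lambda>s. s *\<^sub>R (b - a))) (at t within {0..1})"
      by (auto intro!: derivative_eq_intros)
    moreover have "?p ` {0..1} \<subseteq> S"
      using seg by blast
    ultimately have "((\<lambda>t. f (?p t)) has_derivative (\<lambda>s. f' (?p t) (s *\<^sub>R (b - a)))) (at t within {0..1})"
      using has_derivative_in_compose2[where g=f and g'=f', OF deriv _ that] by blast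
    then show ?thesis
      by (rule bounded_linear.has_derivative[OF P])
  qed
  moreover have "onorm (\<lambda>s. P (f' (?p t) (s *\<^sub>R (b - a)))) \<le> B" if "t \<in> {0..1}" for t
  proof (rule onorm_bound)
    show "0 \<le> B"
      using bound[OF \<open>a \<in> S\<close>] norm_ge_zero by (rule order_trans[rotated])
    fix s :: real
    have "linear (f' (?p t))"
      using deriv[OF seg[OF that]] by (rule has_derivative_linear)
    then have "P (f' (?p t) (s *\<^sub>R (b - a))) = s *\<^sub>R P (f' (?p t) (b - a))"
      using linear_scale[OF bounded_linear.linear[OF P]] by (simp add: linear_scale)
    then have "norm (P (f' (?p t) (s *\<^sub>R (b - a)))) = norm s * norm (P (f' (?p t) (b - a)))"
      by simp
    also have "\<dots> \<le> norm s * B"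
      using bound[OF seg[OF that]] by (rule mult_left_mono) simp
    also have "\<dots> = B * norm s"
      by (rule mult.commute)
    finally show "norm (P (f' (?p t) (s *\<^sub>R (b - a)))) \<le> B * norm s" .
  qed
  ultimately have "norm (P (f (?p 1)) - P (f (?p 0))) \<le> B * norm (1 - 0 :: real)"
    by (intro differentiable_bound[OF convex_real_interval(5)]) auto
  then show ?thesis
    by simp
qed

lemma snd_snd_derivative_le_mu_s1:
  fixes F' :: "('c::finite, 'u::finite, 's::finite) pt \<Rightarrow> ('c, 'u, 's) pt \<Rightarrow>\<^sub>L ('c, 'u, 's) pt"
  assumes M: "\<And>z. z \<in> Dlift R \<Longrightarrow> norm (F' z) \<le> M"
    and L: "0 \<le> L" and w: "w \<in> Dlift R"
    and cone: "norm (fst h, fst (snd h)) \<le> 1 / L * norm (snd (snd h))"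
  shows "norm (snd (snd (blinfun_apply (F' w) h))) \<le> mu_s1 (\<lambda>z. blinfun_apply (F' z)) L R * norm (snd (snd h))"
proof -
  have "norm (snd (snd (blinfun_apply (F' w) h)))
      \<le> (onorm (d_y_fy (F' w)) + 1 / L * onorm (d_lx_fy (F' w))) * norm (snd (snd h))"
    using cone by (rule norm_snd_snd_le_in_cone[OF blinfun.bounded_linear_right])
  also have "\<dots> \<le> mu_s1 (\<lambda>z. blinfun_apply (F' z)) L R * norm (snd (snd h))"
    using M by (intro mult_right_mono le_mu_s1[OF blinfun.bounded_linear_right _ L w])
      (auto simp: norm_blinfun.rep_eq)
  finally show ?thesis .
qed

theorem lemma4p6:
  fixes F :: "('c::finite, 'u::finite, 's::finite) pt \<Rightarrow> ('c, 'u, 's) pt"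
    and F' :: "('c, 'u, 's) pt \<Rightarrow> ('c, 'u, 's) pt \<Rightarrow>\<^sub>L ('c, 'u, 's) pt"
    and R L :: real
    and z1 z2 :: "('c, 'u, 's) pt"
  assumes R_pos: "0 < R" and R_small: "R < RL / 2"
    and L_lo: "2 * R / RL < L" and L_hi: "L < 1"
    and deriv: "\<forall>z\<in>Dlift R. (F has_derivative blinfun_apply (F' z)) (at z within Dlift R)"
    and C1: "continuous_on (Dlift R) F'"
    and lift: "torus_lift R F"
    and rate1: "mu_s1 (\<lambda>z. blinfun_apply (F' z)) L R < 1"
    and rate2: "1 < xi_u1P (\<lambda>z. blinfun_apply (F' z)) L R"
    and rate3: "mu_cs1 (\<lambda>z. blinfun_apply (F' z)) L R < xi_u1P (\<lambda>z. blinfun_apply (F' z)) L R"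
    and rate4: "mu_s1 (\<lambda>z. blinfun_apply (F' z)) L R < xi_cu1P (\<lambda>z. blinfun_apply (F' z)) L R"
    and z1D: "z1 \<in> Dlift R" and z2D: "z2 \<in> Dlift R"
    and cone1: "in_Js z1 z2 (1 / L)"
    and cone2: "in_Js (F z1) (F z2) (1 / L)"
  shows "norm (snd (snd (F z1)) - snd (snd (F z2)))
           \<le> mu_s1 (\<lambda>z. blinfun_apply (F' z)) L R * norm (snd (snd z1) - snd (snd z2))"
proof -
  have L: "0 \<le> L"
    using L_lo R_pos by (simp add: RL_def)
  obtain M where M: "\<And>z. z \<in> Dlift R \<Longrightarrow> norm (F' z) \<le> M"
    using torus_lift_derivative_bounded[OF R_pos deriv C1 lift] by blast
  obtain k where k: "int_vec k"
    and cone: "norm (fst z1 + k - fst z2, fst (snd z1) - fst (snd z2))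
                 \<le> 1 / L * norm (snd (snd z1) - snd (snd z2))"
    using cone1 unfolding in_Js_def by blast
  define z1' where "z1' = (fst z1 + k, snd z1)"
  have z1'D: "z1' \<in> Dlift R"
    using z1D by (simp add: z1'_def Dlift_def)
  obtain n where "F z1' = (fst (F z1) + n, snd (F z1))"
    using lift[unfolded torus_lift_def, rule_format, OF z1D k] unfolding z1'_def by blast
  then have "snd (snd (F z1')) = snd (snd (F z1))"
    by simp
  moreover have "norm (snd (snd (blinfun_apply (F' w) (z1' - z2))))
      \<le> mu_s1 (\<lambda>z. blinfun_apply (F' z)) L R * norm (snd (snd z1) - snd (snd z2))"
    if "w \<in> Dlift R" for w
    using snd_snd_derivative_le_mu_s1[OF M L that, where h="z1' - z2"] cone by (simp add: z1'_def)
  then have "norm (snd (snd (F z1')) - snd (snd (F z2)))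
      \<le> mu_s1 (\<lambda>z. blinfun_apply (F' z)) L R * norm (snd (snd z1) - snd (snd z2))"
    using deriv by (intro differentiable_bound_along_segment[where f=F, OF Dlift_convex z2D z1'D _
          bounded_linear_compose[OF bounded_linear_snd bounded_linear_snd]]) auto
  ultimately show ?thesis
    by simp
qed

end
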